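(* Let $W_0\in\mathcal{W}$, let $s_0\in\mathbb{R}^{|I||J|}$ be a fixed vector and $S_0\in\mathbb{R}^{|I||J|\times|I||J|}$ a fixed matrix, and consider the linear assignment flow $$\dot W=\Pi_W\Big(s_0+S_0\,\Pi_{W_0}\log\frac{W}{W_0}\Big),\qquad W(0)=W_0 .$$ Then its solution admits the representation $$W(t)=\mathrm{Exp}_{W_0}\big(V(t)\big),$$ where $V(t)\in\mathcal{T}_0$ solves the linear ODE $$\dot V=\Pi_{W_0}(s_0+S_0V),\qquad V(0)=0 .$$
   Context: Let $I,J$ be finite index sets. Operations on vectors (products, quotients, $\log$, $e^{(\cdot)}$) are componentwise. $\mathcal{S}=\{p\in\mathbb{R}^{|J|}: p_j>0,\ \langle\mathbb{1},p\rangle=1\}$, $T_0=\{v\in\mathbb{R}^{|J|}:\langle\mathbb{1},v\rangle=0\}$. For $p\in\mathcal{S}$, $\Pi_p(z)=(\mathrm{Diag}(p)-pp^\top)z$ and $\mathrm{Exp}_p:T_0\to\mathcal{S}$, $\mathrm{Exp}_p(v)=\frac{p\,e^{v/p}}{\langle p,e^{v/p}\rangle}$ (whose inverse is $q\mapsto\Pi_p\log\frac{q}{p}$). The assignment manifold is $\mathcal{W}=\mathcal{S}^{|I|}$ with points $W=(W_i)_{i\in I}$, and $\mathcal{T}_0=T_0^{|I|}$; the maps $\Pi_W$ and $\mathrm{Exp}_W$ act blockwise: $(\Pi_WZ)_i=\Pi_{W_i}Z_i$, $(\mathrm{Exp}_W V)_i=\mathrm{Exp}_{W_i}(V_i)$.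 *)

theory Defs
  imports "HOL-Analysis.Analysis"
begin

text \<open>Index sets I, J are the finite types 'i, 'j.
  Vectors of R^{|I||J|} are represented blockwise as real^'j^'i, matrices on R^{|I||J|}
  as functions ('i \<times> 'j) \<Rightarrow> ('i \<times> 'j) \<Rightarrow> real.\<close>

definition prob_simplex :: "real^'j \<Rightarrow> bool" where
  "prob_simplex p \<longleftrightarrow> (\<forall>j. p$j > 0) \<and> (\<Sum>j\<in>UNIV. p$j) = 1"

definition tangent0 :: "real^'j \<Rightarrow> bool" where
  "tangent0 v \<longleftrightarrow> (\<Sum>j\<in>UNIV. v$j) = 0"

definition proj_p :: "real^'j \<Rightarrow> real^'j \<Rightarrow> real^'j" where
  "proj_p p z = (\<chi> j. p$j * z$j - p$j * (\<Sum>k\<in>UNIV. p$k * z$k))"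

definition exp_p :: "real^'j \<Rightarrow> real^'j \<Rightarrow> real^'j" where
  "exp_p p v = (\<chi> j. p$j * exp (v$j / p$j) / (\<Sum>k\<in>UNIV. p$k * exp (v$k / p$k)))"

definition assign_mf :: "real^'j^'i \<Rightarrow> bool" where
  "assign_mf W \<longleftrightarrow> (\<forall>i. prob_simplex (W$i))"

definition tangent0_W :: "real^'j^'i \<Rightarrow> bool" where
  "tangent0_W V \<longleftrightarrow> (\<forall>i. tangent0 (V$i))"

definition proj_W :: "real^'j^'i \<Rightarrow> real^'j^'i \<Rightarrow> real^'j^'i" where
  "proj_W W Z = (\<chi> i. proj_p (W$i) (Z$i))"

definition exp_W :: "real^'j^'i \<Rightarrow> real^'j^'i \<Rightarrow> real^'j^'i" where
  "exp_W W V = (\<chi> i. exp_p (W$i) (V$i))"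

definition log_ratio :: "real^'j^'i \<Rightarrow> real^'j^'i \<Rightarrow> real^'j^'i" where
  "log_ratio W W0 = (\<chi> i j. ln (W$i$j / W0$i$j))"

definition mat_apply :: "('i \<times> 'j \<Rightarrow> 'i \<times> 'j \<Rightarrow> real) \<Rightarrow> real^'j^'i \<Rightarrow> real^'j^'i" where
  "mat_apply S Z = (\<chi> i j. \<Sum>(k,l)\<in>UNIV. S (i,j) (k,l) * Z$k$l)"

end

theory Submission
  imports Defs
begin

text \<open>The chart $Y = \Pi_{W_0}\log(W/W_0)$, the inverse of $\mathrm{Exp}_{W_0}$, turns the assignment
  flow into the linear ODE for $V$: if $\dot w = \Pi_w z$ then $\frac{d}{dt}\Pi_p\log(w/p) = \Pi_p z$,
  because $\Pi_p$ annihilates constant vectors. Hence $Y$ and $V$ solve the same linear ODE with the same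
  initial value, and they coincide by the energy estimate: $e^{-2Kt}\,|Y - V|^2$ is nonincreasing when $K$
  bounds the linear part. Conversely $\frac{d}{dt}\mathrm{Exp}_p(v) = \Pi_{\mathrm{Exp}_p v} z$ whenever
  $\dot v = \Pi_p z$, so $\mathrm{Exp}_{W_0}(V)$ is itself a solution of the assignment flow.\<close>

lemma has_vector_derivative_vec_iff:
  fixes f :: "real \<Rightarrow> 'a::real_normed_vector^'n::finite"
  shows "(f has_vector_derivative f') F \<longleftrightarrow> (\<forall>i. ((\<lambda>t. f t $ i) has_vector_derivative f' $ i) F)"
proof
  assume "(f has_vector_derivative f') F"
  then show "\<forall>i. ((\<lambda>t. f t $ i) has_vector_derivative f' $ i) F"
    using bounded_linear.has_vector_derivative[OF bounded_linear_vec_nth] by blast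
next
  assume "\<forall>i. ((\<lambda>t. f t $ i) has_vector_derivative f' $ i) F"
  then show "(f has_vector_derivative f') F"
    unfolding has_vector_derivative_def has_derivative_def
    by (auto intro!: vec_tendstoI bounded_linear_scaleR_left)
qed

lemma has_vector_derivative_real_vec_iff:
  fixes f :: "real \<Rightarrow> real^'n::finite"
  shows "(f has_vector_derivative f') F \<longleftrightarrow> (\<forall>i. ((\<lambda>t. f t $ i) has_real_derivative f' $ i) F)"
  by (simp add: has_vector_derivative_vec_iff has_real_derivative_iff_has_vector_derivative)

lemma linear_ode_zero_unique_right:
  fixes D :: "real \<Rightarrow> 'a::real_inner"
  assumes A: "bounded_linear A" and t: "0 \<le> t" and D0: "D 0 = 0"
    and D': "\<And>x. x \<in> {0..t} \<Longrightarrow> (D has_vector_derivative A (D x)) (at x within {0..t})"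
  shows "D t = 0"
proof -
  obtain K where K: "\<And>x. norm (A x) \<le> norm x * K"
    using bounded_linear.bounded[OF A] by blast
  have growth: "D x \<bullet> A (D x) \<le> K * (D x \<bullet> D x)" for x
  proof -
    have "D x \<bullet> A (D x) \<le> norm (D x) * norm (A (D x))" by (rule norm_cauchy_schwarz)
    also have "\<dots> \<le> norm (D x) * (norm (D x) * K)" by (rule mult_left_mono[OF K]) simp
    also have "\<dots> = K * (D x \<bullet> D x)" by (simp add: dot_square_norm power2_eq_square)
    finally show ?thesis .
  qed
  \<comment> \<open>the weight absorbs the growth rate \<open>2 K\<close> of \<open>|D|\<^sup>2\<close>, so \<open>g\<close> is nonincreasing\<close>
  define g where "g y = exp (-2*K*y) * (D y \<bullet> D y)" for y
  define g' where "g' y = 2 * exp (-2*K*y) * (D y \<bullet> A (D y) - K * (D y \<bullet> D y))" for y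
  have "(g has_real_derivative g' x) (at x within {0..t})" if "x \<in> {0..t}" for x
  proof -
    have "((\<lambda>y. D y \<bullet> D y) has_real_derivative 2 * (D x \<bullet> A (D x))) (at x within {0..t})"
      using bounded_bilinear.has_vector_derivative[OF bounded_bilinear_inner D'[OF that] D'[OF that]]
      by (simp add: has_real_derivative_iff_has_vector_derivative inner_commute)
    then show ?thesis
      unfolding g_def g'_def by (auto intro!: derivative_eq_intros simp: algebra_simps)
  qed
  then obtain \<xi> where "g t - g 0 = g' \<xi> * (t - 0)"
    using mvt_very_simple[OF t, of g "\<lambda>y. (*) (g' y)"] by (auto simp: has_field_derivative_def)
  moreover have "g' \<xi> \<le> 0"
    using growth[of \<xi>] by (simp add: g'_def mult_nonneg_nonpos)
  ultimately have "g t \<le> 0"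
    using t D0 by (simp add: g_def mult_nonpos_nonneg)
  then have "D t \<bullet> D t \<le> 0"
    by (simp add: g_def mult_le_0_iff)
  then show ?thesis
    by (metis inner_eq_zero_iff inner_ge_zero order_antisym)
qed

lemma linear_ode_zero_unique:
  fixes D :: "real \<Rightarrow> 'a::real_inner"
  assumes A: "bounded_linear A" and T: "is_interval T" "0 \<in> T" and t: "t \<in> T"
    and D0: "D 0 = 0"
    and D': "\<And>x. x \<in> T \<Longrightarrow> (D has_vector_derivative A (D x)) (at x within T)"
  shows "D t = 0"
proof (cases "0 \<le> t")
  case True
  have "{0..t} \<subseteq> T"
    using T t by (meson atLeastAtMost_iff is_interval_1 subsetI)
  then show ?thesis
    using linear_ode_zero_unique_right[of A t D, OF A True D0] D'
    by (meson has_vector_derivative_within_subset subsetD)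
next
  case False
  have mirror_in_T: "-x \<in> T" if "x \<in> {0..-t}" for x
  proof -
    have "t \<le> -x" "-x \<le> 0" using that by auto
    then show ?thesis using T t unfolding is_interval_1 by blast
  qed
  have "(D \<circ> uminus has_vector_derivative - A ((D \<circ> uminus) x)) (at x within {0..-t})"
    if x: "x \<in> {0..-t}" for x
  proof -
    have "(D has_vector_derivative A (D (-x))) (at (-x) within uminus ` {0..-t})"
      using has_vector_derivative_within_subset[OF D'[OF mirror_in_T[OF x]]] mirror_in_T by blast
    from vector_diff_chain_within[OF has_vector_derivative_minus[OF has_vector_derivative_id] this]
    show ?thesis by simp
  qed
  then have "(D \<circ> uminus) (-t) = 0"
    using linear_ode_zero_unique_right[of "\<lambda>x. - A x" "-t" "D \<circ> uminus"]
      bounded_linear_minus[OF A] False D0 by simp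
  then show ?thesis by simp
qed

definition log_p :: "real^'j \<Rightarrow> real^'j \<Rightarrow> real^'j" where
  "log_p p q = proj_p p (\<chi> j. ln (q$j / p$j))"

lemma bounded_linear_proj_p: "bounded_linear (proj_p (p :: real^'j::finite))"
  unfolding linear_conv_bounded_linear[symmetric]
  by (rule linearI) (simp_all add: vec_eq_iff proj_p_def algebra_simps sum.distrib sum_distrib_left)

lemma proj_p_add_const:
  fixes p z :: "real^'j::finite"
  assumes "(\<Sum>j\<in>UNIV. p$j) = 1"
  shows "proj_p p (\<chi> j. z$j + c) = proj_p p z"
proof -
  have "(\<Sum>k\<in>UNIV. p$k * (z$k + c)) = (\<Sum>k\<in>UNIV. p$k * z$k) + c"
    using assms by (simp add: distrib_left sum.distrib sum_distrib_right[symmetric])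
  then show ?thesis by (simp add: proj_p_def vec_eq_iff algebra_simps)
qed

lemma tangent0_proj_p:
  fixes p z :: "real^'j::finite"
  assumes "(\<Sum>j\<in>UNIV. p$j) = 1"
  shows "tangent0 (proj_p p z)"
  using assms by (simp add: tangent0_def proj_p_def sum_subtractf sum_distrib_right[symmetric])

lemma exp_p_zero:
  fixes p :: "real^'j::finite"
  assumes "(\<Sum>j\<in>UNIV. p$j) = 1"
  shows "exp_p p 0 = p"
  using assms by (simp add: exp_p_def vec_eq_iff)

lemma exp_p_normalizer_pos:
  fixes p v :: "real^'j::finite"
  assumes "prob_simplex p"
  shows "(\<Sum>k\<in>UNIV. p$k * exp (v$k / p$k)) > 0"
  using assms by (intro sum_pos) (auto simp: prob_simplex_def)

lemma prob_simplex_exp_p: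
  fixes p v :: "real^'j::finite"
  assumes "prob_simplex p"
  shows "prob_simplex (exp_p p v)"
proof -
  define Z where "Z = (\<Sum>k\<in>UNIV. p$k * exp (v$k / p$k))"
  have Z: "Z > 0" unfolding Z_def by (rule exp_p_normalizer_pos[OF assms])
  have "exp_p p v $ j > 0" for j
    using assms Z by (simp add: prob_simplex_def exp_p_def Z_def)
  moreover have "(\<Sum>j\<in>UNIV. exp_p p v $ j) = 1"
    using Z by (simp add: exp_p_def Z_def sum_divide_distrib[symmetric])
  ultimately show ?thesis by (simp add: prob_simplex_def)
qed

lemma log_p_exp_p:
  fixes p v :: "real^'j::finite"
  assumes p: "prob_simplex p" and v: "tangent0 v"
  shows "log_p p (exp_p p v) = v"
proof -
  define Z where "Z = (\<Sum>k\<in>UNIV. p$k * exp (v$k / p$k))"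
  have "Z > 0" unfolding Z_def by (rule exp_p_normalizer_pos[OF p])
  moreover have "p$j > 0" "p$j \<noteq> 0" for j using p by (simp_all add: prob_simplex_def less_imp_neq[symmetric])
  ultimately have "ln (exp_p p v $ j / p$j) = v$j / p$j + - ln Z" for j
    by (simp add: exp_p_def Z_def ln_div ln_mult)
  then have "log_p p (exp_p p v) = proj_p p (\<chi> j. v$j / p$j)"
    using p proj_p_add_const[of p "\<chi> j. v$j / p$j" "- ln Z"] by (simp add: log_p_def prob_simplex_def)
  also have "\<dots> = v"
    using p v by (simp add: proj_p_def tangent0_def prob_simplex_def vec_eq_iff less_imp_neq[symmetric])
  finally show ?thesis .
qed

lemma exp_p_log_p:
  fixes p q :: "real^'j::finite"
  assumes p: "prob_simplex p" and q: "prob_simplex q"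
  shows "exp_p p (log_p p q) = q"
proof -
  define c where "c = (\<Sum>k\<in>UNIV. p$k * ln (q$k / p$k))"
  have "p$j * exp (log_p p q $ j / p$j) = q$j * exp (-c)" for j
  proof -
    have pj: "p$j > 0" and qj: "q$j > 0" using p q by (simp_all add: prob_simplex_def)
    then have "log_p p q $ j / p$j = ln (q$j / p$j) - c"
      by (simp add: log_p_def proj_p_def c_def field_simps)
    with pj qj show ?thesis by (simp add: exp_diff exp_minus divide_inverse)
  qed
  moreover have "(\<Sum>k\<in>UNIV. q$k * exp (-c)) = exp (-c)"
    using q by (simp add: prob_simplex_def sum_distrib_right[symmetric])
  ultimately show ?thesis
    by (simp add: exp_p_def vec_eq_iff)
qed

lemma exp_p_has_vector_derivative:
  fixes p z :: "real^'j::finite" and v :: "real \<Rightarrow> real^'j"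
  assumes p: "prob_simplex p" and v': "(v has_vector_derivative proj_p p z) (at t within T)"
  shows "((\<lambda>s. exp_p p (v s)) has_vector_derivative proj_p (exp_p p (v t)) z) (at t within T)"
proof -
  have pk: "p$k > 0" "p$k \<noteq> 0" for k using p by (simp_all add: prob_simplex_def less_imp_neq[symmetric])
  define c where "c = (\<Sum>k\<in>UNIV. p$k * z$k)"
  define e where "e k = exp (v t $ k / p $ k)" for k
  define Z where "Z = (\<Sum>k\<in>UNIV. p$k * e k)"
  define q where "q = exp_p p (v t)"
  have Z: "Z > 0" unfolding Z_def e_def by (rule exp_p_normalizer_pos[OF p])
  have q: "q$k = p$k * e k / Z" for k by (simp add: q_def exp_p_def e_def Z_def)
  have e': "((\<lambda>s. exp (v s $ k / p $ k)) has_real_derivative e k * (z$k - c)) (at t within T)" for k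
  proof -
    have "((\<lambda>s. v s $ k) has_real_derivative p$k * z$k - p$k * c) (at t within T)"
      using v' by (simp add: has_vector_derivative_real_vec_iff proj_p_def c_def)
    then show ?thesis
      using pk[of k] by (auto intro!: derivative_eq_intros simp: e_def field_simps)
  qed
  have "(\<Sum>k\<in>UNIV. q$k * z$k) * Z = (\<Sum>k\<in>UNIV. p$k * e k * z$k)"
    using Z by (simp add: q sum_distrib_right)
  then have "(\<Sum>k\<in>UNIV. p$k * (e k * (z$k - c))) = Z * ((\<Sum>k\<in>UNIV. q$k * z$k) - c)"
    by (simp add: Z_def algebra_simps sum_subtractf sum_distrib_left)
  moreover have "((\<lambda>s. \<Sum>k\<in>UNIV. p$k * exp (v s $ k / p $ k)) has_real_derivative
      (\<Sum>k\<in>UNIV. p$k * (e k * (z$k - c)))) (at t within T)"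
    by (intro DERIV_sum DERIV_cmult e')
  ultimately have Z': "((\<lambda>s. \<Sum>k\<in>UNIV. p$k * exp (v s $ k / p $ k)) has_real_derivative
      Z * ((\<Sum>k\<in>UNIV. q$k * z$k) - c)) (at t within T)"
    by simp
  show ?thesis
    unfolding has_vector_derivative_real_vec_iff
  proof
    fix j
    have "((\<lambda>s. p$j * exp (v s $ j / p $ j) / (\<Sum>k\<in>UNIV. p$k * exp (v s $ k / p $ k))) has_real_derivative
        (p$j * (e j * (z$j - c)) * Z - Z * ((\<Sum>k\<in>UNIV. q$k * z$k) - c) * (p$j * e j)) / Z^2) (at t within T)"
      using DERIV_quotient[OF DERIV_cmult[OF e'[of j], of "p$j"] Z'] Z
      by (simp add: e_def Z_def power2_eq_square)
    moreover have "(p$j * (e j * (z$j - c)) * Z - Z * ((\<Sum>k\<in>UNIV. q$k * z$k) - c) * (p$j * e j)) / Z^2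
        = proj_p q z $ j"
      using Z by (simp add: proj_p_def q field_simps power2_eq_square)
    ultimately show "((\<lambda>s. exp_p p (v s) $ j) has_real_derivative proj_p (exp_p p (v t)) z $ j) (at t within T)"
      by (simp add: exp_p_def q_def)
  qed
qed

lemma log_p_has_vector_derivative:
  fixes p z :: "real^'j::finite" and w :: "real \<Rightarrow> real^'j"
  assumes p: "prob_simplex p" and w: "prob_simplex (w t)"
    and w': "(w has_vector_derivative proj_p (w t) z) (at t within T)"
  shows "((\<lambda>s. log_p p (w s)) has_vector_derivative proj_p p z) (at t within T)"
proof -
  define d where "d = (\<Sum>k\<in>UNIV. w t $ k * z$k)"
  have L': "((\<lambda>s. \<chi> j. ln (w s $ j / p $ j)) has_vector_derivative (\<chi> j. z$j + - d)) (at t within T)"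
    unfolding has_vector_derivative_real_vec_iff
  proof
    fix k
    have pos: "p$k > 0" "w t $ k > 0" using p w by (simp_all add: prob_simplex_def)
    have "((\<lambda>s. w s $ k) has_real_derivative w t $ k * z$k - w t $ k * d) (at t within T)"
      using w' by (simp add: has_vector_derivative_real_vec_iff proj_p_def d_def)
    then show "((\<lambda>s. (\<chi> j. ln (w s $ j / p $ j)) $ k) has_real_derivative (\<chi> j. z$j + - d) $ k) (at t within T)"
      using pos by (auto intro!: derivative_eq_intros simp: field_simps)
  qed
  have "((\<lambda>s. proj_p p (\<chi> j. ln (w s $ j / p $ j))) has_vector_derivative proj_p p (\<chi> j. z$j + - d))
      (at t within T)"
    by (rule bounded_linear.has_vector_derivative[OF bounded_linear_proj_p L'])
  moreover have "(\<Sum>j\<in>UNIV. p$j) = 1" using p by (simp add: prob_simplex_def)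
  ultimately show ?thesis
    unfolding log_p_def by (simp only: proj_p_add_const)
qed

lemma bounded_linear_proj_W: "bounded_linear (proj_W (W :: real^'j::finite^'i::finite))"
  unfolding linear_conv_bounded_linear[symmetric]
  by (rule linearI) (simp_all add: vec_eq_iff proj_W_def proj_p_def algebra_simps sum.distrib sum_distrib_left)

lemma bounded_linear_mat_apply:
  "bounded_linear (mat_apply (S :: 'i::finite \<times> 'j::finite \<Rightarrow> 'i \<times> 'j \<Rightarrow> real))"
  unfolding linear_conv_bounded_linear[symmetric]
  by (rule linearI) (simp_all add: vec_eq_iff mat_apply_def algebra_simps sum.distrib sum_distrib_left case_prod_beta)

lemma proj_W_mat_apply_affine_diff:
  "proj_W W0 (s0 + mat_apply S0 X) - proj_W W0 (s0 + mat_apply S0 Y) = proj_W W0 (mat_apply S0 (X - Y))"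
  by (simp add: linear_add linear_diff
      bounded_linear.linear[OF bounded_linear_proj_W] bounded_linear.linear[OF bounded_linear_mat_apply])

lemma tangent0_W_proj_W:
  fixes W Z :: "real^'j::finite^'i::finite"
  assumes "assign_mf W"
  shows "tangent0_W (proj_W W Z)"
  using assms by (simp add: tangent0_W_def proj_W_def assign_mf_def prob_simplex_def tangent0_proj_p)

lemma assign_mf_exp_W:
  fixes W V :: "real^'j::finite^'i::finite"
  assumes "assign_mf W"
  shows "assign_mf (exp_W W V)"
  using assms by (simp add: assign_mf_def exp_W_def prob_simplex_exp_p)

lemma exp_W_zero:
  fixes W :: "real^'j::finite^'i::finite"
  assumes "assign_mf W"
  shows "exp_W W 0 = W"
  using assms by (simp add: exp_W_def assign_mf_def prob_simplex_def exp_p_zero vec_eq_iff)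

lemma proj_W_log_ratio_nth: "proj_W W0 (log_ratio W W0) $ i = log_p (W0$i) (W$i)"
  by (simp add: proj_W_def log_ratio_def log_p_def)

lemma log_ratio_exp_W:
  fixes W0 V :: "real^'j::finite^'i::finite"
  assumes "assign_mf W0" "tangent0_W V"
  shows "proj_W W0 (log_ratio (exp_W W0 V) W0) = V"
  using assms
  by (simp add: vec_eq_iff proj_W_log_ratio_nth exp_W_def assign_mf_def tangent0_W_def log_p_exp_p)

lemma exp_W_log_ratio:
  fixes W0 W :: "real^'j::finite^'i::finite"
  assumes "assign_mf W0" "assign_mf W"
  shows "exp_W W0 (proj_W W0 (log_ratio W W0)) = W"
  using assms
  by (simp add: vec_eq_iff proj_W_log_ratio_nth exp_W_def assign_mf_def exp_p_log_p)

lemma exp_W_has_vector_derivative: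
  fixes W0 Z :: "real^'j::finite^'i::finite" and V :: "real \<Rightarrow> real^'j^'i"
  assumes W0: "assign_mf W0" and V': "(V has_vector_derivative proj_W W0 Z) (at t within T)"
  shows "((\<lambda>s. exp_W W0 (V s)) has_vector_derivative proj_W (exp_W W0 (V t)) Z) (at t within T)"
proof (rule has_vector_derivative_vec_iff[THEN iffD2], intro allI)
  fix i
  have "((\<lambda>s. V s $ i) has_vector_derivative proj_p (W0$i) (Z$i)) (at t within T)"
    using V' by (simp add: has_vector_derivative_vec_iff proj_W_def)
  from exp_p_has_vector_derivative[OF _ this] W0
  show "((\<lambda>s. exp_W W0 (V s) $ i) has_vector_derivative proj_W (exp_W W0 (V t)) Z $ i) (at t within T)"
    by (simp add: assign_mf_def exp_W_def proj_W_def)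
qed

lemma log_ratio_has_vector_derivative:
  fixes W0 Z :: "real^'j::finite^'i::finite" and W :: "real \<Rightarrow> real^'j^'i"
  assumes W0: "assign_mf W0" and W: "assign_mf (W t)"
    and W': "(W has_vector_derivative proj_W (W t) Z) (at t within T)"
  shows "((\<lambda>s. proj_W W0 (log_ratio (W s) W0)) has_vector_derivative proj_W W0 Z) (at t within T)"
proof (rule has_vector_derivative_vec_iff[THEN iffD2], intro allI)
  fix i
  have "prob_simplex (W0$i)" "prob_simplex (W t $ i)"
    using W0 W by (simp_all add: assign_mf_def)
  moreover have "((\<lambda>s. W s $ i) has_vector_derivative proj_p (W t $ i) (Z$i)) (at t within T)"
    using W' by (simp add: has_vector_derivative_vec_iff proj_W_def)
  ultimately have "((\<lambda>s. log_p (W0$i) (W s $ i)) has_vector_derivative proj_p (W0$i) (Z$i)) (at t within T)"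
    by (rule log_p_has_vector_derivative[where w="\<lambda>s. W s $ i"])
  then show "((\<lambda>s. proj_W W0 (log_ratio (W s) W0) $ i) has_vector_derivative proj_W W0 Z $ i) (at t within T)"
    unfolding proj_W_log_ratio_nth by (simp add: proj_W_def)
qed

lemma tangent0_W_invariant:
  fixes V V' :: "real \<Rightarrow> real^'j::finite^'i::finite"
  assumes V': "\<And>t. (V has_vector_derivative V' t) (at t)"
    and tangent: "\<And>t. tangent0_W (V' t)" and init: "tangent0_W (V 0)"
  shows "tangent0_W (V t)"
  unfolding tangent0_W_def tangent0_def
proof
  fix i
  have "((\<lambda>s. \<Sum>j\<in>UNIV. V s $ i $ j) has_real_derivative 0) (at x)" for x
  proof -
    have "((\<lambda>s. V s $ i) has_vector_derivative V' x $ i) (at x)"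
      using V' by (simp add: has_vector_derivative_vec_iff)
    then have "((\<lambda>s. \<Sum>j\<in>UNIV. V s $ i $ j) has_real_derivative (\<Sum>j\<in>UNIV. V' x $ i $ j)) (at x)"
      by (intro DERIV_sum) (simp add: has_vector_derivative_real_vec_iff)
    with tangent show ?thesis by (simp add: tangent0_W_def tangent0_def)
  qed
  then show "(\<Sum>j\<in>UNIV. V t $ i $ j) = 0"
    using DERIV_isconst_all[of "\<lambda>s. \<Sum>j\<in>UNIV. V s $ i $ j" t 0] init
    by (simp add: tangent0_W_def tangent0_def)
qed

theorem proposition4p2:
  fixes W0 s0 :: "real^'j::finite^'i::finite"
    and S0 :: "'i \<times> 'j \<Rightarrow> 'i \<times> 'j \<Rightarrow> real"
    and V W :: "real \<Rightarrow> real^'j^'i"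
    and T :: "real set"
  assumes W0: "assign_mf W0"
    and V_ode: "\<And>t. (V has_vector_derivative proj_W W0 (s0 + mat_apply S0 (V t))) (at t)"
    and V_init: "V 0 = 0"
    and T: "is_interval T" "0 \<in> T"
    and W_mf: "\<And>t. t \<in> T \<Longrightarrow> assign_mf (W t)"
    and W_ode: "\<And>t. t \<in> T \<Longrightarrow>
       (W has_vector_derivative proj_W (W t) (s0 + mat_apply S0 (proj_W W0 (log_ratio (W t) W0))))
         (at t within T)"
    and W_init: "W 0 = W0"
  shows "(\<forall>t. tangent0_W (V t))
    \<and> (\<forall>t\<in>T. W t = exp_W W0 (V t))
    \<and> (\<forall>t. assign_mf (exp_W W0 (V t))
          \<and> ((\<lambda>t. exp_W W0 (V t)) has_vector_derivative
               proj_W (exp_W W0 (V t)) (s0 + mat_apply S0 (proj_W W0 (log_ratio (exp_W W0 (V t)) W0)))) (at t))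
    \<and> exp_W W0 (V 0) = W0"
proof -
  have V_tangent: "tangent0_W (V t)" for t
    using tangent0_W_invariant[OF V_ode tangent0_W_proj_W[OF W0]] V_init
    by (simp add: tangent0_W_def tangent0_def)
  have flow: "((\<lambda>t. exp_W W0 (V t)) has_vector_derivative
      proj_W (exp_W W0 (V t)) (s0 + mat_apply S0 (proj_W W0 (log_ratio (exp_W W0 (V t)) W0)))) (at t)" for t
    using exp_W_has_vector_derivative[OF W0 V_ode] log_ratio_exp_W[OF W0 V_tangent] by simp
  define Y where "Y t = proj_W W0 (log_ratio (W t) W0)" for t
  have "Y t - V t = 0" if "t \<in> T" for t
  proof (rule linear_ode_zero_unique[OF _ T that])
    show "bounded_linear (\<lambda>X. proj_W W0 (mat_apply S0 X))"
      using bounded_linear_compose[OF bounded_linear_proj_W bounded_linear_mat_apply] .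
    show "Y 0 - V 0 = 0"
      using log_ratio_exp_W[OF W0, of 0] exp_W_zero[OF W0] W_init V_init
      by (simp add: Y_def tangent0_W_def tangent0_def)
    show "((\<lambda>t. Y t - V t) has_vector_derivative proj_W W0 (mat_apply S0 (Y x - V x))) (at x within T)"
      if "x \<in> T" for x
      using has_vector_derivative_diff[OF log_ratio_has_vector_derivative[OF W0 W_mf W_ode]
          has_vector_derivative_at_within[OF V_ode]] that
      by (simp add: Y_def proj_W_mat_apply_affine_diff)
  qed
  then have "W t = exp_W W0 (V t)" if "t \<in> T" for t
    using exp_W_log_ratio[OF W0 W_mf[OF that]] that by (simp add: Y_def)
  then show ?thesis
    using V_tangent assign_mf_exp_W[OF W0] flow exp_W_zero[OF W0] V_init by simp
qed

end
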